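(* Let $m\ge 2$, let $\varepsilon \le \frac{1}{2^{3m}\cdot 4m}$ be a power of 2, let $0<\tau<1$, and let $\mathcal{G} = \{2^{-i}\varepsilon j : i \in \mathbb{Z},\ j \in \{1,\dots,2/\varepsilon^2 - 1\}\} \cap (0,1)$. Consider the following rounding procedure applied to a value $x \in [0,1]$: while $x \ge \tau$, let $y$ be the largest element of $\mathcal{G}$ with $y \le x$, output $y$ as a new state and replace $x$ by $x-y$; when $x<\tau$, output the remaining $x$ as a final state. If this procedure is applied to each state of a discrete distribution $p_i$ with at most $n$ states (replacing each state by the multiset of outputs), then the resulting distribution has at most $n\lceil 1 + \log_2(1/\tau)\rceil$ states.
   Context: Logarithms are base 2. *)

theory Defs
  imports Complex_Main "HOL-Library.Multiset"
begin

definition grid :: "real \<Rightarrow> real set" where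
  "grid eps = {2 powr (- real_of_int i) * eps * real j | i j.
                 1 \<le> j \<and> real j \<le> 2 / eps^2 - 1} \<inter> {0<..<1}"

inductive rounding :: "real set \<Rightarrow> real \<Rightarrow> real \<Rightarrow> real list \<Rightarrow> bool"
  for G :: "real set" and tau :: real where
  stop: "x < tau \<Longrightarrow> rounding G tau x [x]"
| step: "tau \<le> x \<Longrightarrow> y = (GREATEST y. y \<in> G \<and> y \<le> x) \<Longrightarrow>
         rounding G tau (x - y) ys \<Longrightarrow> rounding G tau x (y # ys)"

end

theory Submission
  imports Defs
begin

text \<open>Every x in (0, 1] has a grid point in (x/2, x]: the power of two 2^\<lfloor>log 2 x\<rfloor> if x < 1
  (take j = 1/eps) and 1 - eps if x = 1. Above any positive bound the grid is finite, so the
  greedy choice exists and leaves a remainder below x/2. Starting from x \<le> 1 \<le> tau 2^L with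
  L = \<lceil>log 2 (1/tau)\<rceil>, the value therefore drops below tau after at most L steps, and each
  state is replaced by at most L + 1 outputs.\<close>

lemma le_Greatest_of_finite_above:
  fixes S :: "'a::linorder set"
  assumes "finite {y \<in> S. w \<le> y}" and "w \<in> S" and "w \<le> x"
  shows "w \<le> (GREATEST y. y \<in> S \<and> y \<le> x)"
proof -
  define T where "T = {y \<in> S. w \<le> y \<and> y \<le> x}"
  have "finite T" unfolding T_def by (rule finite_subset[OF _ assms(1)]) auto
  moreover have "w \<in> T" unfolding T_def using assms(2,3) by simp
  ultimately have "Max T \<in> T" and "w \<le> Max T" by (auto intro: Max_in)
  have "y \<le> Max T" if "y \<in> S" and "y \<le> x" for y
  proof (cases "w \<le> y")
    case True
    with that have "y \<in> T" unfolding T_def by simp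
    with \<open>finite T\<close> show ?thesis by simp
  next
    case False
    with \<open>w \<le> Max T\<close> show ?thesis by simp
  qed
  with \<open>Max T \<in> T\<close> have "(GREATEST y. y \<in> S \<and> y \<le> x) = Max T"
    unfolding T_def by (intro Greatest_equality) auto
  with \<open>w \<le> Max T\<close> show ?thesis by simp
qed

context
  fixes G :: "real set" and tau :: real
  assumes greedy_halves: "\<And>x. tau \<le> x \<Longrightarrow> x \<le> 1 \<Longrightarrow> x - (GREATEST y. y \<in> G \<and> y \<le> x) < x / 2"
begin

lemma rounding_exists:
  assumes "x \<le> 1" and "x < tau * 2 ^ N"
  shows "\<exists>ys. rounding G tau x ys"
  using assms
proof (induction N arbitrary: x)
  case 0
  then have "rounding G tau x [x]" by (intro rounding.stop) simp
  then show ?case ..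
next
  case (Suc N)
  show ?case
  proof (cases "x < tau")
    case True
    then have "rounding G tau x [x]" by (rule rounding.stop)
    then show ?thesis ..
  next
    case False
    define y where "y = (GREATEST y. y \<in> G \<and> y \<le> x)"
    have "x - y < x / 2" using greedy_halves False Suc.prems(1) unfolding y_def by simp
    moreover have "tau * 2 ^ Suc N = 2 * (tau * 2 ^ N)" by simp
    ultimately have "x - y \<le> 1" and "x - y < tau * 2 ^ N" using Suc.prems by linarith+
    then obtain ys where "rounding G tau (x - y) ys" using Suc.IH by blast
    with False have "rounding G tau x (y # ys)" by (intro rounding.step y_def) simp_all
    then show ?thesis ..
  qed
qed

lemma rounding_length_le:
  assumes "rounding G tau x ys" and "x \<le> 1" and "x < tau * 2 ^ N"
  shows "length ys \<le> N + 1"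
  using assms
proof (induction arbitrary: N rule: rounding.induct)
  case (stop x)
  then show ?case by simp
next
  case (step x y ys)
  have "x - y < x / 2" using greedy_halves[OF step.hyps(1) step.prems(1)] step.hyps(2) by simp
  have "N \<noteq> 0"
  proof
    assume "N = 0"
    with step.prems(2) step.hyps(1) show False by simp
  qed
  then obtain M where M: "N = Suc M" using not0_implies_Suc by blast
  then have "tau * 2 ^ N = 2 * (tau * 2 ^ M)" by simp
  then have "x - y \<le> 1" and "x - y < tau * 2 ^ M"
    using \<open>x - y < x / 2\<close> step.prems by linarith+
  then have "length ys \<le> M + 1" by (rule step.IH)
  with M show ?case by simp
qed

text \<open>Unlike the previous lemma this allows x = tau 2^N, e.g. x = 1 and tau = 2^-N, at the price
  of N \<ge> 1: the first step already lands strictly below tau 2^(N-1).\<close>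

lemma rounding_length_le':
  assumes "rounding G tau x ys" and "x \<le> 1" and "x \<le> tau * 2 ^ N" and "1 \<le> N"
  shows "length ys \<le> N + 1"
  using assms(1)
proof cases
  case stop
  then show ?thesis by simp
next
  case (step y ys')
  have "x - y < x / 2" using greedy_halves[OF step(2) assms(2)] step(3) by simp
  obtain M where M: "N = Suc M" using assms(4) not0_implies_Suc by fastforce
  then have "tau * 2 ^ N = 2 * (tau * 2 ^ M)" by simp
  then have "x - y \<le> 1" and "x - y < tau * 2 ^ M"
    using \<open>x - y < x / 2\<close> assms(2,3) by linarith+
  with step(4) have "length ys' \<le> M + 1" by (rule rounding_length_le)
  with M step(1) show ?thesis by simp
qed

end

lemma grid_memI:
  assumes "y = 2 powr (- real_of_int i) * eps * real j" and "1 \<le> j" and "real j \<le> 2 / eps^2 - 1"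
    and "0 < y" and "y < 1"
  shows "y \<in> grid eps"
  unfolding grid_def using assms by (intro IntI CollectI) (auto intro!: exI[of _ i] exI[of _ j])

lemma finite_grid_above:
  assumes eps: "0 < eps" and w: "0 < w"
  shows "finite {y \<in> grid eps. w \<le> y}"
proof -
  define i\<^sub>0 where "i\<^sub>0 = \<lfloor>log 2 eps\<rfloor>"
  define i\<^sub>1 where "i\<^sub>1 = \<lceil>- log 2 (w * eps / 2)\<rceil>"
  define J where "J = nat \<lfloor>2 / eps^2\<rfloor>"
  define g where "g = (\<lambda>(i, j). 2 powr (- real_of_int i) * eps * real j)"
  txt \<open>The scale i is bounded below by 2^-i eps \<le> y < 1 and above by w \<le> y \<le> 2^-i eps (2/eps^2).\<close>
  have "{y \<in> grid eps. w \<le> y} \<subseteq> g ` ({i\<^sub>0..i\<^sub>1} \<times> {..J})"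
  proof
    fix y assume "y \<in> {y \<in> grid eps. w \<le> y}"
    then obtain i j where y: "y = 2 powr (- real_of_int i) * eps * real j" and "1 \<le> j"
      and "real j \<le> 2 / eps^2 - 1" and "y < 1" and "w \<le> y"
      unfolding grid_def by auto
    then have j: "real j \<le> 2 / eps^2" by simp
    have pos: "0 < 2 powr (- real_of_int i)" by simp
    have "2 powr (- real_of_int i) * eps * 1 \<le> y"
      unfolding y using \<open>1 \<le> j\<close> pos eps by (intro mult_left_mono) auto
    with \<open>y < 1\<close> have "log 2 (2 powr (- real_of_int i) * eps) \<le> 0"
      using pos eps by (simp add: log_le_zero_cancel_iff)
    then have "- real_of_int i + log 2 eps \<le> 0" using pos eps by (simp add: log_mult)
    then have "i\<^sub>0 \<le> i" unfolding i\<^sub>0_def by linarith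
    have "y \<le> 2 powr (- real_of_int i) * eps * (2 / eps^2)"
      unfolding y using j pos eps by (intro mult_left_mono) auto
    with \<open>w \<le> y\<close> have "w \<le> 2 powr (- real_of_int i) * eps * (2 / eps^2)" by simp
    also have "\<dots> = 2 powr (- real_of_int i) * 2 / eps"
      using eps by (simp add: power2_eq_square field_simps)
    finally have "w * eps / 2 \<le> 2 powr (- real_of_int i)" using eps by (simp add: field_simps)
    then have "log 2 (w * eps / 2) \<le> log 2 (2 powr (- real_of_int i))"
      using w eps by (subst log_le_cancel_iff) auto
    then have "log 2 (w * eps / 2) \<le> - real_of_int i" by simp
    then have "i \<le> i\<^sub>1" unfolding i\<^sub>1_def by linarith
    have "j \<le> J" using j unfolding J_def by (simp add: le_nat_floor)
    show "y \<in> g ` ({i\<^sub>0..i\<^sub>1} \<times> {..J})"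
      using \<open>i\<^sub>0 \<le> i\<close> \<open>i \<le> i\<^sub>1\<close> \<open>j \<le> J\<close>
      by (intro image_eqI[where x = "(i, j)"]) (simp_all add: g_def y)
  qed
  moreover have "finite (g ` ({i\<^sub>0..i\<^sub>1} \<times> {..J}))" by simp
  ultimately show ?thesis by (rule finite_subset)
qed

lemma grid_point_in_upper_half:
  fixes E :: nat
  assumes E: "3 \<le> E" and eps: "eps = 1 / real E" and x: "0 < x" "x \<le> 1"
  shows "\<exists>w \<in> grid eps. x / 2 < w \<and> w \<le> x"
proof -
  have j_bound: "real E \<le> 2 / eps^2 - 1"
  proof -
    have "1 * real E \<le> real E * real E" using E by (intro mult_right_mono) auto
    then have "real E \<le> 2 * (real E * real E) - 1" using E by linarith
    then show ?thesis unfolding eps by (simp add: power_divide power2_eq_square)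
  qed
  show ?thesis
  proof (cases "x < 1")
    case True
    define k where "k = \<lfloor>log 2 x\<rfloor>"
    define w where "w = 2 powr real_of_int k"
    have "log 2 x < 0" using x True by simp
    then have "k \<le> -1" unfolding k_def by linarith
    then have "w \<le> 2 powr (-1)" unfolding w_def by (intro powr_mono) auto
    then have "w < 1" by simp
    have "w \<le> 2 powr log 2 x" unfolding w_def k_def by (intro powr_mono) auto
    then have "w \<le> x" using x by simp
    have "x / 2 = 2 powr (log 2 x - 1)" using x by (simp add: powr_diff)
    also have "\<dots> < w" unfolding w_def k_def by (intro powr_less_mono) linarith+
    finally have "x / 2 < w" .
    moreover have "w \<in> grid eps"
      by (rule grid_memI[where i = "- k" and j = E])
        (use E j_bound \<open>w < 1\<close> in \<open>auto simp: w_def eps\<close>)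
    ultimately show ?thesis using \<open>w \<le> x\<close> by blast
  next
    case False
    then have "x = 1" using x by simp
    have "eps \<le> 1 / 3" unfolding eps using E by (simp add: field_simps)
    have "1 - eps \<in> grid eps"
    proof (rule grid_memI[where i = 0 and j = "E - 1"])
      show "1 - eps = 2 powr (- real_of_int 0) * eps * real (E - 1)"
        unfolding eps using E by (simp add: of_nat_diff field_simps)
      show "real (E - 1) \<le> 2 / eps^2 - 1" using j_bound E by (simp add: of_nat_diff)
    qed (use E \<open>eps \<le> 1 / 3\<close> eps in auto)
    then show ?thesis using \<open>x = 1\<close> \<open>eps \<le> 1 / 3\<close> eps by (intro bexI[of _ "1 - eps"]) auto
  qed
qed

lemma grid_greedy_halves:
  fixes E :: nat
  assumes "3 \<le> E" and "eps = 1 / real E" and "0 < x" and "x \<le> 1"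
  shows "x - (GREATEST y. y \<in> grid eps \<and> y \<le> x) < x / 2"
proof -
  obtain w where w: "w \<in> grid eps" "x / 2 < w" "w \<le> x"
    using grid_point_in_upper_half assms by blast
  have "finite {y \<in> grid eps. w \<le> y}"
    using finite_grid_above assms w by simp
  with w have "w \<le> (GREATEST y. y \<in> grid eps \<and> y \<le> x)"
    using le_Greatest_of_finite_above by blast
  with w show ?thesis by simp
qed

lemma one_le_mult_two_power_ceiling_log:
  assumes "0 < tau"
  shows "1 \<le> tau * 2 ^ nat \<lceil>log 2 (1 / tau)\<rceil>"
proof -
  have "1 / tau = 2 powr log 2 (1 / tau)" using assms by simp
  also have "\<dots> \<le> 2 powr real (nat \<lceil>log 2 (1 / tau)\<rceil>)" by (intro powr_mono of_nat_ceiling) auto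
  also have "\<dots> = 2 ^ nat \<lceil>log 2 (1 / tau)\<rceil>" by (simp add: powr_realpow)
  finally show ?thesis using assms by (simp add: field_simps)
qed

lemma grid_rounding_exists:
  fixes E :: nat
  assumes "3 \<le> E" and "eps = 1 / real E" and "0 < tau" and "x \<le> 1"
  shows "\<exists>ys. rounding (grid eps) tau x ys"
proof -
  define L where "L = nat \<lceil>log 2 (1 / tau)\<rceil>"
  have "1 \<le> tau * 2 ^ L" unfolding L_def using assms(3) by (rule one_le_mult_two_power_ceiling_log)
  moreover have "tau * 2 ^ L < tau * 2 ^ (L + 1)" using assms(3) by simp
  ultimately have "x < tau * 2 ^ (L + 1)" using assms(4) by linarith
  moreover have "x - (GREATEST y. y \<in> grid eps \<and> y \<le> x) < x / 2" if "tau \<le> x" "x \<le> 1" for x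
    using grid_greedy_halves[OF assms(1,2)] assms(3) that by simp
  ultimately show ?thesis using rounding_exists assms(4) by blast
qed

lemma grid_rounding_length_le:
  fixes E :: nat
  assumes "3 \<le> E" and "eps = 1 / real E" and "0 < tau" and "tau < 1"
    and "rounding (grid eps) tau x ys" and "x \<le> 1"
  shows "length ys \<le> nat \<lceil>1 + log 2 (1 / tau)\<rceil>"
proof -
  define L where "L = nat \<lceil>log 2 (1 / tau)\<rceil>"
  have "0 < log 2 (1 / tau)" using assms(3,4) by simp
  then have "1 \<le> L" and "nat \<lceil>1 + log 2 (1 / tau)\<rceil> = L + 1"
    unfolding L_def by (simp_all add: Suc_le_eq add.commute[of 1] nat_add_distrib)
  moreover have "1 \<le> tau * 2 ^ L" unfolding L_def using assms(3) by (rule one_le_mult_two_power_ceiling_log)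
  moreover have "x - (GREATEST y. y \<in> grid eps \<and> y \<le> x) < x / 2" if "tau \<le> x" "x \<le> 1" for x
    using grid_greedy_halves[OF assms(1,2)] assms(3) that by simp
  ultimately show ?thesis using rounding_length_le' assms(5,6) by fastforce
qed

lemma inverse_nat_of_power_of_two:
  assumes "eps = 2 powr real_of_int k" and "eps \<le> 1 / 3"
  obtains E :: nat where "3 \<le> E" and "eps = 1 / real E"
proof -
  have "2 powr real_of_int k \<le> 2 powr 0" using assms by simp
  then have "k \<le> 0" by (subst (asm) powr_le_cancel_iff) auto
  define E :: nat where "E = 2 ^ nat (- k)"
  have "eps = 1 / real E"
    unfolding assms(1) E_def using \<open>k \<le> 0\<close>
    by (simp add: powr_minus_divide[symmetric] powr_realpow[symmetric])
  moreover have "0 < E" unfolding E_def by simp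
  ultimately have "3 \<le> E" using assms(2) by simp
  then show thesis using \<open>eps = 1 / real E\<close> by (rule that)
qed

lemma inverse_two_power_mult_le_eighth:
  assumes "2 \<le> m"
  shows "1 / (2 ^ (3 * m) * (4 * real m)) \<le> 1 / 8"
proof -
  have "(1::real) * 8 \<le> 2 ^ (3 * m) * (4 * real m)"
    using assms by (intro mult_mono) auto
  then show ?thesis by (intro divide_left_mono) auto
qed

lemma size_sum_mset_mset_le:
  assumes "\<And>x. x \<in># p \<Longrightarrow> length (f x) \<le> B"
  shows "size (\<Sum>x \<in># p. mset (f x)) \<le> size p * B"
proof -
  have "size (\<Sum>x \<in># p. mset (f x)) = (\<Sum>x \<in># p. length (f x))"
    by (simp add: size_mset_sum_mset_conv multiset.map_comp comp_def)
  also have "\<dots> \<le> (\<Sum>x \<in># p. B)" using assms by (rule sum_mset_mono)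
  finally show ?thesis by (simp add: sum_mset_constant)
qed

theorem claim5:
  fixes m n :: nat and eps tau :: real and p :: "real multiset"
  assumes "m \<ge> 2"
    and "\<exists>k::int. eps = 2 powr real_of_int k"
    and "eps \<le> 1 / (2 ^ (3 * m) * (4 * real m))"
    and "0 < tau" and "tau < 1"
    and "\<forall>x \<in># p. 0 \<le> x \<and> x \<le> 1"
    and "sum_mset p = 1"
    and "size p \<le> n"
  shows "(\<forall>x \<in># p. \<exists>ys. rounding (grid eps) tau x ys)
       \<and> (\<forall>f. (\<forall>x \<in># p. rounding (grid eps) tau x (f x)) \<longrightarrow>
            int (size (\<Sum>x \<in># p. mset (f x))) \<le> int n * \<lceil>1 + log 2 (1 / tau)\<rceil>)"
proof -
  obtain k :: int where "eps = 2 powr real_of_int k" using assms(2) by blast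
  moreover have "eps \<le> 1 / 3" using assms(3) inverse_two_power_mult_le_eighth[OF assms(1)] by linarith
  ultimately obtain E :: nat where E: "3 \<le> E" "eps = 1 / real E" by (rule inverse_nat_of_power_of_two)
  define C where "C = \<lceil>1 + log 2 (1 / tau)\<rceil>"
  have "0 < log 2 (1 / tau)" using assms(4,5) by simp
  then have "0 \<le> C" unfolding C_def by simp
  show ?thesis
  proof (intro conjI ballI allI impI)
    fix x assume "x \<in># p"
    then show "\<exists>ys. rounding (grid eps) tau x ys"
      using grid_rounding_exists[OF E assms(4)] assms(6) by simp
  next
    fix f assume runs: "\<forall>x \<in># p. rounding (grid eps) tau x (f x)"
    have "length (f x) \<le> nat C" if "x \<in># p" for x
      unfolding C_def using runs assms(6) that by (intro grid_rounding_length_le[OF E assms(4,5)]) auto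
    then have "size (\<Sum>x \<in># p. mset (f x)) \<le> size p * nat C" by (rule size_sum_mset_mset_le)
    also have "\<dots> \<le> n * nat C" using assms(8) by (rule mult_le_mono1)
    finally show "int (size (\<Sum>x \<in># p. mset (f x))) \<le> int n * \<lceil>1 + log 2 (1 / tau)\<rceil>"
      using \<open>0 \<le> C\<close> unfolding C_def[symmetric] by (metis of_nat_le_iff of_nat_mult nat_0_le)
  qed
qed

end
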